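(* Let $n\ge 1$, let $Q_n$ be the universal algebra of pseudo-roots, and let $\Gamma_n$ be the graph of subsets of $\{1,\dots,n\}$ (both defined in the context). Let $Z=\{x_{A_1,i_1},x_{A_2,i_2},\dots,x_{A_n,i_n}\}\subseteq Q_n$ be a set of pseudo-roots such that $i_1,i_2,\dots,i_n$ are pairwise distinct. If the set of edges $\{(A_1,i_1),(A_2,i_2),\dots,(A_n,i_n)\}$ of $\Gamma_n$ is connected, then $Z$ is a sufficient set, i.e. the $du$-envelope of $Z$ contains a defining set of pseudo-roots of $\mathcal P(t)$.
   Context: Fix a field $k$. The algebra $Q_n$ is the associative unital $k$-algebra with generators $x_{A,i}$, where $A\subseteq\{1,\dots,n\}$ and $i\in\{1,\dots,n\}\setminus A$ (these generators are called pseudo-roots), subject to the relations $x_{A\cup\{i\},j}+x_{A,i}=x_{A\cup\{j\},i}+x_{A,j}$ and $x_{A\cup\{i\},j}\,x_{A,i}=x_{A\cup\{j\},i}\,x_{A,j}$ for all $A\subseteq\{1,\dots,n\}$ and all $i\ne j$ with $i,j\notin A$. Let $t$ be a central indeterminate. For an ordering $(i_1,\dots,i_n)$ of $\{1,\dots,n\}$ put $A_1=\emptyset$, $A_k=\{i_1,\dots,i_{k-1}\}$, and $\mathcal P(t)=(t-x_{A_n,i_n})(t-x_{A_{n-1},i_{n-1}})\cdots(t-x_{A_1,i_1})\in Q_n[t]$; this polynomial is independent of the ordering. A set $Y$ of pseudo-roots is a defining set if $\mathcal P(t)=(t-y_n)(t-y_{n-1})\cdots(t-y_1)$ for some $y_1,\dots,y_n\in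 Y$. The graph $\Gamma_n$ has as vertices all subsets of $\{1,\dots,n\}$ and as edges the pairs $(A,i)$ with $i\notin A$; the edge $(A,i)$ has tail $A\cup\{i\}$ and head $A$ (it corresponds to the pseudo-root $x_{A,i}$). Operations on pseudo-roots: for two distinct pseudo-roots $x_{A,i},x_{B,j}$ whose edges have a common head ($A=B$), a pseudo-root $\xi$ is obtained from the ordered pair $(x_{A,i},x_{B,j})$ by the $u$-operation if $(x_{A,i}-x_{B,j})x_{A,i}=\xi(x_{A,i}-x_{B,j})$; for two distinct pseudo-roots whose edges have a common tail ($A\cup\{i\}=B\cup\{j\}$), a pseudo-root $\eta$ is obtained from the ordered pair $(x_{A,i},x_{B,j})$ by the $d$-operation if $(x_{A,i}-x_{B,j})\eta=x_{A,i}(x_{A,i}-x_{B,j})$. The $du$-envelope of a set $Z$ of pseudo-roots is the set of pseudo-roots obtainable from elements of $Z$ by successive applications of $d$- and $u$-operations (including $Z$ itself). $Z$ is sufficient if its $du$-envelope contains a defining set. A set $G$ of edges is connected if the undirected graph whose vertices are the heads and tails of edges of $G$ and whose edges are the edges of $G$ (directions forgotten) is connected. *)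

theory Defs
  imports Main
begin

text \<open>Pseudo-roots are labelled by pairs (A, i). Elements of Q_n[t] are represented by
 terms of the free term algebra over the generators, the scalars of k and a central
 indeterminate T, modulo the congruence generated by the axioms of associative unital
 k-algebras, centrality of scalars and of T, and the defining relations of Q_n.\<close>

type_synonym pr = "nat set \<times> nat"

definition is_pr :: "nat \<Rightarrow> pr \<Rightarrow> bool" where
  "is_pr n p \<longleftrightarrow> fst p \<subseteq> {1..n} \<and> snd p \<in> {1..n} \<and> snd p \<notin> fst p"

datatype 'k qterm = Gen pr | Sc 'k | T | Add "'k qterm" "'k qterm"
  | Mul "'k qterm" "'k qterm" | Neg "'k qterm"

definition Sub :: "'k qterm \<Rightarrow> 'k qterm \<Rightarrow> 'k qterm" where
  "Sub x y = Add x (Neg y)"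

text \<open>Equality in Q_n[t] (and, on T-free terms, in Q_n).\<close>
inductive qeq :: "nat \<Rightarrow> ('k::field) qterm \<Rightarrow> 'k qterm \<Rightarrow> bool" for n where
  refl: "qeq n x x"
| sym: "qeq n x y \<Longrightarrow> qeq n y x"
| trans: "qeq n x y \<Longrightarrow> qeq n y z \<Longrightarrow> qeq n x z"
| cong_add: "qeq n x x' \<Longrightarrow> qeq n y y' \<Longrightarrow> qeq n (Add x y) (Add x' y')"
| cong_mul: "qeq n x x' \<Longrightarrow> qeq n y y' \<Longrightarrow> qeq n (Mul x y) (Mul x' y')"
| cong_neg: "qeq n x x' \<Longrightarrow> qeq n (Neg x) (Neg x')"
| add_assoc: "qeq n (Add (Add x y) z) (Add x (Add y z))"
| add_comm: "qeq n (Add x y) (Add y x)"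
| add_zero: "qeq n (Add x (Sc 0)) x"
| add_neg: "qeq n (Add x (Neg x)) (Sc 0)"
| mul_assoc: "qeq n (Mul (Mul x y) z) (Mul x (Mul y z))"
| mul_one_left: "qeq n (Mul (Sc 1) x) x"
| mul_one_right: "qeq n (Mul x (Sc 1)) x"
| distrib_left: "qeq n (Mul x (Add y z)) (Add (Mul x y) (Mul x z))"
| distrib_right: "qeq n (Mul (Add x y) z) (Add (Mul x z) (Mul y z))"
| sc_add: "qeq n (Add (Sc a) (Sc b)) (Sc (a + b))"
| sc_mul: "qeq n (Mul (Sc a) (Sc b)) (Sc (a * b))"
| sc_central: "qeq n (Mul (Sc a) x) (Mul x (Sc a))"
| T_central: "qeq n (Mul T x) (Mul x T)"
| rel_add: "A \<subseteq> {1..n} \<Longrightarrow> i \<in> {1..n} \<Longrightarrow> j \<in> {1..n} \<Longrightarrow> i \<noteq> j \<Longrightarrow> i \<notin> A \<Longrightarrow> j \<notin> A \<Longrightarrow>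
    qeq n (Add (Gen (A \<union> {i}, j)) (Gen (A, i))) (Add (Gen (A \<union> {j}, i)) (Gen (A, j)))"
| rel_mul: "A \<subseteq> {1..n} \<Longrightarrow> i \<in> {1..n} \<Longrightarrow> j \<in> {1..n} \<Longrightarrow> i \<noteq> j \<Longrightarrow> i \<notin> A \<Longrightarrow> j \<notin> A \<Longrightarrow>
    qeq n (Mul (Gen (A \<union> {i}, j)) (Gen (A, i))) (Mul (Gen (A \<union> {j}, i)) (Gen (A, j)))"

definition qprod :: "'k::field qterm list \<Rightarrow> 'k qterm" where
  "qprod xs = foldr Mul xs (Sc 1)"

text \<open>P(t) = (t - x_{A_n,i_n}) ... (t - x_{A_1,i_1}) for the ordering (1,...,n).\<close>
definition Ppoly :: "nat \<Rightarrow> 'k::field qterm" where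
  "Ppoly n = qprod (map (\<lambda>k. Sub T (Gen (set (take k [1..<Suc n]), [1..<Suc n] ! k)))
                      (rev [0..<n]))"

definition defining_set :: "nat \<Rightarrow> 'k::field itself \<Rightarrow> pr set \<Rightarrow> bool" where
  "defining_set n _ Y \<longleftrightarrow> (\<exists>ys. length ys = n \<and> set ys \<subseteq> Y \<and>
      qeq n (Ppoly n :: 'k qterm) (qprod (map (\<lambda>y. Sub T (Gen y)) (rev ys))))"

inductive_set envelope :: "nat \<Rightarrow> 'k::field itself \<Rightarrow> pr set \<Rightarrow> pr set" for n K Z where
  base: "z \<in> Z \<Longrightarrow> z \<in> envelope n K Z"
| u_op: "(A, i) \<in> envelope n K Z \<Longrightarrow> (A, j) \<in> envelope n K Z \<Longrightarrow> i \<noteq> j \<Longrightarrow> is_pr n xi \<Longrightarrow>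
    qeq n (Mul (Sub (Gen (A, i)) (Gen (A, j))) (Gen (A, i)) :: 'k qterm)
          (Mul (Gen xi) (Sub (Gen (A, i)) (Gen (A, j)))) \<Longrightarrow> xi \<in> envelope n K Z"
| d_op: "(A, i) \<in> envelope n K Z \<Longrightarrow> (B, j) \<in> envelope n K Z \<Longrightarrow> (A, i) \<noteq> (B, j) \<Longrightarrow>
    A \<union> {i} = B \<union> {j} \<Longrightarrow> is_pr n eta \<Longrightarrow>
    qeq n (Mul (Sub (Gen (A, i)) (Gen (B, j))) (Gen eta) :: 'k qterm)
          (Mul (Gen (A, i)) (Sub (Gen (A, i)) (Gen (B, j)))) \<Longrightarrow> eta \<in> envelope n K Z"

definition sufficient :: "nat \<Rightarrow> 'k::field itself \<Rightarrow> pr set \<Rightarrow> bool" where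
  "sufficient n K Z \<longleftrightarrow> (\<exists>Y \<subseteq> envelope n K Z. defining_set n K Y)"

text \<open>Connectedness of a set of edges of Gamma_n (edge (A,i): tail A \<union> {i}, head A).\<close>
definition edge_vertices :: "pr set \<Rightarrow> nat set set" where
  "edge_vertices G = (\<Union>(A, i)\<in>G. {A, A \<union> {i}})"

definition edge_adj :: "pr set \<Rightarrow> nat set \<Rightarrow> nat set \<Rightarrow> bool" where
  "edge_adj G u v \<longleftrightarrow> (\<exists>(A, i)\<in>G. (u = A \<and> v = A \<union> {i}) \<or> (v = A \<and> u = A \<union> {i}))"

definition edges_connected :: "pr set \<Rightarrow> bool" where
  "edges_connected G \<longleftrightarrow>
     (\<forall>u\<in>edge_vertices G. \<forall>v\<in>edge_vertices G. (edge_adj G)\<^sup>*\<^sup>* u v)"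

end

theory Submission
  imports Defs
begin

text \<open>
  Put c = x_{A+i,j}, a = x_{A,i}, d = x_{A+j,i}, b = x_{A,j}. The relations c + a = d + b and
  c a = d b give d (a - b) = (a - b) a and d (d - c) = (d - c) a, since a - b = d - c. So the
  u-operation on (x_{A,i}, x_{A,j}) produces x_{A+j,i}, and the d-operation on
  (x_{A+j,i}, x_{A+i,j}) produces x_{A,i}: the envelope E is closed under the two square rules
  (A,i), (A,j) \<in> E \<Longrightarrow> (A+j,i) \<in> E and (D+j,i), (D+i,j) \<in> E \<Longrightarrow> (D,i) \<in> E.
  The same relations give (t - c)(t - a) = (t - d)(t - b), so the product of the factors t - x
  along a maximal chain of \<Gamma>_n is P(t) whatever the chain, and a maximal chain with all its
  edges in E yields a defining set inside E.

  Such a chain is obtained by adding the edges of Z one at a time, each touching the edges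
  already added, while keeping a base vertex B such that every vertex of the added edges lies on
  a chain from B with edges in E whose labels are exactly the labels added so far. An edge
  (A,l) going up from a vertex A is absorbed by sliding l down the chain with the u-rule; an
  edge going down from A+l is absorbed by lowering the base to B - l with the d-rule. Once all
  n labels are used, B is disjoint from {1..n}, hence empty.
\<close>

section \<open>Ring identities in Q_n[t]\<close>

lemmas qeq_trans [trans] = qeq.trans

lemma qeq_add_zero_left: "qeq n (Add (Sc 0) x) x"
  by (meson qeq.add_comm qeq.add_zero qeq.trans)

lemma qeq_neg_unique:
  assumes "qeq n (Add u v) (Sc 0)"
  shows "qeq n v (Neg u)"
proof -
  have "qeq n v (Add v (Add u (Neg u)))"
    by (meson qeq.add_neg qeq.add_zero qeq.cong_add qeq.refl qeq.sym qeq.trans)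
  also have "qeq n \<dots> (Add (Add u v) (Neg u))"
    by (meson qeq.add_assoc qeq.add_comm qeq.cong_add qeq.refl qeq.sym qeq.trans)
  also have "qeq n \<dots> (Add (Sc 0) (Neg u))" by (rule qeq.cong_add, rule assms, rule qeq.refl)
  also have "qeq n \<dots> (Neg u)" by (rule qeq_add_zero_left)
  finally show ?thesis .
qed

lemma qeq_idem_zero:
  assumes "qeq n (Add z z) z"
  shows "qeq n z (Sc 0)"
proof -
  have "qeq n z (Add z (Add z (Neg z)))"
    by (meson qeq.add_neg qeq.add_zero qeq.cong_add qeq.refl qeq.sym qeq.trans)
  also have "qeq n \<dots> (Add (Add z z) (Neg z))" by (rule qeq.sym, rule qeq.add_assoc)
  also have "qeq n \<dots> (Add z (Neg z))" by (rule qeq.cong_add, rule assms, rule qeq.refl)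
  also have "qeq n \<dots> (Sc 0)" by (rule qeq.add_neg)
  finally show ?thesis .
qed

lemma qeq_mul_zero_right: "qeq n (Mul x (Sc 0)) (Sc 0)"
proof (rule qeq_idem_zero)
  have "qeq n (Add (Mul x (Sc 0)) (Mul x (Sc 0))) (Mul x (Add (Sc 0) (Sc 0)))"
    by (rule qeq.sym, rule qeq.distrib_left)
  also have "qeq n \<dots> (Mul x (Sc 0))"
    by (rule qeq.cong_mul, rule qeq.refl, rule qeq_add_zero_left)
  finally show "qeq n (Add (Mul x (Sc 0)) (Mul x (Sc 0))) (Mul x (Sc 0))" .
qed

lemma qeq_mul_zero_left: "qeq n (Mul (Sc 0) x) (Sc 0)"
proof (rule qeq_idem_zero)
  have "qeq n (Add (Mul (Sc 0) x) (Mul (Sc 0) x)) (Mul (Add (Sc 0) (Sc 0)) x)"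
    by (rule qeq.sym, rule qeq.distrib_right)
  also have "qeq n \<dots> (Mul (Sc 0) x)"
    by (rule qeq.cong_mul, rule qeq_add_zero_left, rule qeq.refl)
  finally show "qeq n (Add (Mul (Sc 0) x) (Mul (Sc 0) x)) (Mul (Sc 0) x)" .
qed

lemma qeq_mul_neg_right: "qeq n (Mul x (Neg y)) (Neg (Mul x y))"
proof (rule qeq_neg_unique)
  have "qeq n (Add (Mul x y) (Mul x (Neg y))) (Mul x (Add y (Neg y)))"
    by (rule qeq.sym, rule qeq.distrib_left)
  also have "qeq n \<dots> (Mul x (Sc 0))" by (rule qeq.cong_mul, rule qeq.refl, rule qeq.add_neg)
  also have "qeq n \<dots> (Sc 0)" by (rule qeq_mul_zero_right)
  finally show "qeq n (Add (Mul x y) (Mul x (Neg y))) (Sc 0)" .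
qed

lemma qeq_mul_neg_left: "qeq n (Mul (Neg x) y) (Neg (Mul x y))"
proof (rule qeq_neg_unique)
  have "qeq n (Add (Mul x y) (Mul (Neg x) y)) (Mul (Add x (Neg x)) y)"
    by (rule qeq.sym, rule qeq.distrib_right)
  also have "qeq n \<dots> (Mul (Sc 0) y)" by (rule qeq.cong_mul, rule qeq.add_neg, rule qeq.refl)
  also have "qeq n \<dots> (Sc 0)" by (rule qeq_mul_zero_left)
  finally show "qeq n (Add (Mul x y) (Mul (Neg x) y)) (Sc 0)" .
qed

lemma qeq_neg_neg: "qeq n (Neg (Neg x)) x"
  by (rule qeq.sym, rule qeq_neg_unique) (meson qeq.add_comm qeq.add_neg qeq.trans)

lemma qeq_add_swap_middle: "qeq n (Add (Add p q) (Add r s)) (Add (Add p r) (Add q s))"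
proof -
  have "qeq n (Add (Add p q) (Add r s)) (Add p (Add (Add q r) s))"
    by (meson qeq.add_assoc qeq.cong_add qeq.refl qeq.sym qeq.trans)
  also have "qeq n \<dots> (Add p (Add (Add r q) s))"
    by (intro qeq.cong_add qeq.refl qeq.add_comm)
  also have "qeq n \<dots> (Add (Add p r) (Add q s))"
    by (meson qeq.add_assoc qeq.cong_add qeq.refl qeq.sym qeq.trans)
  finally show ?thesis .
qed

lemma qeq_neg_add: "qeq n (Neg (Add x y)) (Add (Neg x) (Neg y))"
proof (rule qeq.sym, rule qeq_neg_unique)
  have "qeq n (Add (Add x y) (Add (Neg x) (Neg y))) (Add (Add x (Neg x)) (Add y (Neg y)))"
    by (rule qeq_add_swap_middle)
  also have "qeq n \<dots> (Add (Sc 0) (Sc 0))" by (intro qeq.cong_add qeq.add_neg)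
  also have "qeq n \<dots> (Sc 0)" by (rule qeq_add_zero_left)
  finally show "qeq n (Add (Add x y) (Add (Neg x) (Neg y))) (Sc 0)" .
qed

lemma qeq_cong_sub: "qeq n x x' \<Longrightarrow> qeq n y y' \<Longrightarrow> qeq n (Sub x y) (Sub x' y')"
  unfolding Sub_def by (intro qeq.cong_add qeq.cong_neg)

lemma qeq_sub_eq_sub_of_add_eq:
  assumes "qeq n (Add c a) (Add d b)"
  shows "qeq n (Sub d c) (Sub a b)"
proof -
  have "qeq n (Sub d c) (Add (Add d (Neg c)) (Add b (Neg b)))"
    unfolding Sub_def by (meson qeq.add_neg qeq.add_zero qeq.cong_add qeq.refl qeq.sym qeq.trans)
  also have "qeq n \<dots> (Add (Add d b) (Add (Neg c) (Neg b)))" by (rule qeq_add_swap_middle)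
  also have "qeq n \<dots> (Add (Add c a) (Add (Neg c) (Neg b)))"
    by (rule qeq.cong_add, rule qeq.sym, rule assms, rule qeq.refl)
  also have "qeq n \<dots> (Add (Add c (Neg c)) (Add a (Neg b)))" by (rule qeq_add_swap_middle)
  also have "qeq n \<dots> (Add (Sc 0) (Add a (Neg b)))" by (intro qeq.cong_add qeq.add_neg qeq.refl)
  also have "qeq n \<dots> (Sub a b)" unfolding Sub_def by (rule qeq_add_zero_left)
  finally show ?thesis .
qed

lemma qeq_mul_sub_right: "qeq n (Mul x (Sub y z)) (Sub (Mul x y) (Mul x z))"
  unfolding Sub_def
  by (rule qeq.trans, rule qeq.distrib_left, rule qeq.cong_add, rule qeq.refl, rule qeq_mul_neg_right)

lemma qeq_mul_sub_left: "qeq n (Mul (Sub x y) z) (Sub (Mul x z) (Mul y z))"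
  unfolding Sub_def
  by (rule qeq.trans, rule qeq.distrib_right, rule qeq.cong_add, rule qeq.refl, rule qeq_mul_neg_left)

lemma qeq_intertwine:
  assumes sum: "qeq n (Add c a) (Add d b)" and prod: "qeq n (Mul c a) (Mul d b)"
  shows "qeq n (Mul d (Sub d c)) (Mul (Sub d c) a)"
proof -
  have "qeq n (Mul d (Sub d c)) (Mul d (Sub a b))"
    by (rule qeq.cong_mul, rule qeq.refl, rule qeq_sub_eq_sub_of_add_eq, rule sum)
  also have "qeq n \<dots> (Sub (Mul d a) (Mul d b))" by (rule qeq_mul_sub_right)
  also have "qeq n \<dots> (Sub (Mul d a) (Mul c a))" by (rule qeq_cong_sub, rule qeq.refl, rule qeq.sym, rule prod)
  also have "qeq n \<dots> (Mul (Sub d c) a)" by (rule qeq.sym, rule qeq_mul_sub_left)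
  finally show ?thesis .
qed

lemma qeq_u_identity:
  assumes sum: "qeq n (Add c a) (Add d b)" and prod: "qeq n (Mul c a) (Mul d b)"
  shows "qeq n (Mul (Sub a b) a) (Mul d (Sub a b))"
proof -
  have diff: "qeq n (Sub d c) (Sub a b)" by (rule qeq_sub_eq_sub_of_add_eq, rule sum)
  have "qeq n (Mul (Sub a b) a) (Mul (Sub d c) a)"
    by (rule qeq.cong_mul, rule qeq.sym, rule diff, rule qeq.refl)
  also have "qeq n \<dots> (Mul d (Sub d c))" by (rule qeq.sym, rule qeq_intertwine[OF sum prod])
  also have "qeq n \<dots> (Mul d (Sub a b))" by (rule qeq.cong_mul, rule qeq.refl, rule diff)
  finally show ?thesis .
qed

lemma qeq_quadratic_expand:
  "qeq n (Mul (Sub T c) (Sub T a)) (Add (Mul T T) (Add (Neg (Mul T (Add c a))) (Mul c a)))"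
proof -
  have high: "qeq n (Mul T (Sub T a)) (Add (Mul T T) (Neg (Mul T a)))"
    using qeq_mul_sub_right[of n T T a] unfolding Sub_def .
  have "qeq n (Mul (Neg c) (Sub T a)) (Add (Mul (Neg c) T) (Mul (Neg c) (Neg a)))"
    unfolding Sub_def by (rule qeq.distrib_left)
  also have "qeq n \<dots> (Add (Neg (Mul T c)) (Mul c a))"
  proof (rule qeq.cong_add)
    have "qeq n (Mul (Neg c) T) (Neg (Mul c T))" by (rule qeq_mul_neg_left)
    also have "qeq n \<dots> (Neg (Mul T c))" by (rule qeq.cong_neg, rule qeq.sym, rule qeq.T_central)
    finally show "qeq n (Mul (Neg c) T) (Neg (Mul T c))" .
    have "qeq n (Mul (Neg c) (Neg a)) (Neg (Mul c (Neg a)))" by (rule qeq_mul_neg_left)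
    also have "qeq n \<dots> (Neg (Neg (Mul c a)))" by (rule qeq.cong_neg, rule qeq_mul_neg_right)
    also have "qeq n \<dots> (Mul c a)" by (rule qeq_neg_neg)
    finally show "qeq n (Mul (Neg c) (Neg a)) (Mul c a)" .
  qed
  finally have low: "qeq n (Mul (Neg c) (Sub T a)) (Add (Neg (Mul T c)) (Mul c a))" .
  have middle: "qeq n (Add (Neg (Mul T a)) (Neg (Mul T c))) (Neg (Mul T (Add c a)))"
  proof -
    have "qeq n (Add (Neg (Mul T a)) (Neg (Mul T c))) (Add (Neg (Mul T c)) (Neg (Mul T a)))"
      by (rule qeq.add_comm)
    also have "qeq n \<dots> (Neg (Add (Mul T c) (Mul T a)))" by (rule qeq.sym, rule qeq_neg_add)
    also have "qeq n \<dots> (Neg (Mul T (Add c a)))"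
      by (rule qeq.cong_neg, rule qeq.sym, rule qeq.distrib_left)
    finally show ?thesis .
  qed
  have "qeq n (Mul (Sub T c) (Sub T a)) (Add (Mul T (Sub T a)) (Mul (Neg c) (Sub T a)))"
    unfolding Sub_def by (rule qeq.distrib_right)
  also have "qeq n \<dots> (Add (Add (Mul T T) (Neg (Mul T a))) (Add (Neg (Mul T c)) (Mul c a)))"
    by (rule qeq.cong_add, rule high, rule low)
  also have "qeq n \<dots> (Add (Mul T T) (Add (Add (Neg (Mul T a)) (Neg (Mul T c))) (Mul c a)))"
    by (meson qeq.add_assoc qeq.cong_add qeq.refl qeq.sym qeq.trans)
  also have "qeq n \<dots> (Add (Mul T T) (Add (Neg (Mul T (Add c a))) (Mul c a)))"
    by (intro qeq.cong_add qeq.refl middle)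
  finally show ?thesis .
qed

lemma qeq_quadratic_swap:
  assumes "qeq n (Add c a) (Add d b)" and "qeq n (Mul c a) (Mul d b)"
  shows "qeq n (Mul (Sub T c) (Sub T a)) (Mul (Sub T d) (Sub T b))"
proof -
  have "qeq n (Mul (Sub T c) (Sub T a)) (Add (Mul T T) (Add (Neg (Mul T (Add c a))) (Mul c a)))"
    by (rule qeq_quadratic_expand)
  also have "qeq n \<dots> (Add (Mul T T) (Add (Neg (Mul T (Add d b))) (Mul d b)))"
    by (intro qeq.cong_add qeq.cong_neg qeq.cong_mul qeq.refl assms)
  also have "qeq n \<dots> (Mul (Sub T d) (Sub T b))" by (rule qeq.sym, rule qeq_quadratic_expand)
  finally show ?thesis .
qed

section \<open>Chains of \<Gamma>_n and their products\<close>

lemma qprod_Nil [simp]: "qprod [] = Sc 1"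
  and qprod_Cons [simp]: "qprod (a # l) = Mul a (qprod l)"
  by (simp_all add: qprod_def)

lemma qprod_append: "qeq n (qprod (l @ m)) (Mul (qprod l) (qprod m))"
proof (induction l)
  case Nil
  show ?case by (simp, rule qeq.sym, rule qeq.mul_one_left)
next
  case (Cons a l)
  have "qeq n (qprod ((a # l) @ m)) (Mul a (Mul (qprod l) (qprod m)))"
    by (simp, rule qeq.cong_mul, rule qeq.refl, rule Cons.IH)
  also have "qeq n \<dots> (Mul (qprod (a # l)) (qprod m))" by (simp, rule qeq.sym, rule qeq.mul_assoc)
  finally show ?case .
qed

lemma qprod_append_cong:
  assumes "qeq n (qprod l) (qprod l')" and "qeq n (qprod m) (qprod m')"
  shows "qeq n (qprod (l @ m)) (qprod (l' @ m'))"
proof -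
  have "qeq n (qprod (l @ m)) (Mul (qprod l) (qprod m))" by (rule qprod_append)
  also have "qeq n \<dots> (Mul (qprod l') (qprod m'))" by (rule qeq.cong_mul, fact+)
  also have "qeq n \<dots> (qprod (l' @ m'))" by (rule qeq.sym, rule qprod_append)
  finally show ?thesis .
qed

lemma qprod_pair: "qeq n (qprod [p, q]) (Mul p q)"
  by (simp, rule qeq.cong_mul, rule qeq.refl, rule qeq.mul_one_right)

definition linear_factors :: "pr list \<Rightarrow> 'k::field qterm list" where
  "linear_factors ys = map (\<lambda>y. Sub T (Gen y)) (rev ys)"

lemma linear_factors_Nil [simp]: "linear_factors [] = []"
  and linear_factors_Cons [simp]: "linear_factors (y # ys) = linear_factors ys @ [Sub T (Gen y)]"
  by (simp_all add: linear_factors_def)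

fun chain_edges :: "nat set \<Rightarrow> nat list \<Rightarrow> pr list" where
  "chain_edges B [] = []"
| "chain_edges B (x # xs) = (B, x) # chain_edges (insert x B) xs"

lemma chain_edges_conv_nth:
  "chain_edges B xs = map (\<lambda>k. (B \<union> set (take k xs), xs ! k)) [0..<length xs]"
proof (induction xs arbitrary: B)
  case (Cons x xs)
  have "[0..<Suc (length xs)] = 0 # map Suc [0..<length xs]"
    by (simp only: map_Suc_upt upt_conv_Cons[OF zero_less_Suc])
  then show ?case using Cons by (simp add: comp_def)
qed simp

lemma length_chain_edges [simp]: "length (chain_edges B xs) = length xs"
  by (induction xs arbitrary: B) simp_all

lemma Ppoly_eq_chain_product: "Ppoly n = qprod (linear_factors (chain_edges {} [1..<Suc n]))"
  unfolding Ppoly_def linear_factors_def chain_edges_conv_nth by (simp add: rev_map comp_def)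

lemma qprod_chain_swap_pair:
  assumes "B \<subseteq> {1..n}" "a \<in> {1..n}" "y \<in> {1..n}" "a \<noteq> y" "a \<notin> B" "y \<notin> B"
  shows "qeq n (qprod (linear_factors (chain_edges B [a, y])) :: 'k::field qterm)
               (qprod (linear_factors (chain_edges B [y, a])))"
proof -
  have "qeq n (Mul (Sub T (Gen (insert a B, y))) (Sub T (Gen (B, a))) :: 'k qterm)
              (Mul (Sub T (Gen (insert y B, a))) (Sub T (Gen (B, y))))"
    by (rule qeq_quadratic_swap) (use qeq.rel_add[OF assms] qeq.rel_mul[OF assms] in simp_all)
  then show ?thesis
    by (simp only: chain_edges.simps linear_factors_Cons linear_factors_Nil append.simps)
      (meson qprod_pair qeq.sym qeq.trans)
qed

lemma qprod_chain_move_to_front: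
  assumes "B \<subseteq> {1..n}" "set (pre @ y # post) \<subseteq> {1..n}" "B \<inter> set (pre @ y # post) = {}"
    "distinct (pre @ y # post)"
  shows "qeq n (qprod (linear_factors (chain_edges B (pre @ y # post))) :: 'k::field qterm)
               (qprod (linear_factors (chain_edges B (y # pre @ post))))"
  using assms
proof (induction pre arbitrary: B)
  case Nil
  show ?case by (simp add: qeq.refl)
next
  case (Cons a pre)
  let ?tail = "linear_factors (chain_edges (insert y (insert a B)) (pre @ post)) :: 'k qterm list"
  have IH: "qeq n (qprod (linear_factors (chain_edges (insert a B) (pre @ y # post))) :: 'k qterm)
                  (qprod (linear_factors (chain_edges (insert a B) (y # pre @ post))))"
    using Cons.prems by (intro Cons.IH) auto
  have "qprod (linear_factors (chain_edges B ((a # pre) @ y # post))) =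
        qprod (linear_factors (chain_edges (insert a B) (pre @ y # post)) @
          [Sub T (Gen (B, a)) :: 'k qterm])"
    by simp
  also have "qeq n \<dots>
      (qprod (linear_factors (chain_edges (insert a B) (y # pre @ post)) @ [Sub T (Gen (B, a))]))"
    by (rule qprod_append_cong[OF IH qeq.refl])
  also have "\<dots> = qprod (?tail @ linear_factors (chain_edges B [a, y]))" by simp
  also have "qeq n \<dots> (qprod (?tail @ linear_factors (chain_edges B [y, a])))"
    by (rule qprod_append_cong, rule qeq.refl, rule qprod_chain_swap_pair) (use Cons.prems in auto)
  also have "\<dots> = qprod (linear_factors (chain_edges B (y # (a # pre) @ post)))"
    by (simp add: insert_commute)
  finally show ?case .
qed

lemma qprod_chain_perm:
  assumes "B \<subseteq> {1..n}" "set xs \<subseteq> {1..n}" "B \<inter> set xs = {}" "distinct xs"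
    "distinct xs'" "set xs' = set xs"
  shows "qeq n (qprod (linear_factors (chain_edges B xs)) :: 'k::field qterm)
               (qprod (linear_factors (chain_edges B xs')))"
  using assms
proof (induction xs' arbitrary: B xs)
  case Nil
  then show ?case by (simp add: qeq.refl)
next
  case (Cons y ys)
  then have "y \<in> set xs" by auto
  then obtain pre post where xs: "xs = pre @ y # post" by (meson split_list)
  have "qeq n (qprod (linear_factors (chain_edges B xs)) :: 'k qterm)
              (qprod (linear_factors (chain_edges B (y # pre @ post))))"
    unfolding xs by (rule qprod_chain_move_to_front) (use Cons.prems xs in auto)
  also have "qeq n \<dots> (qprod (linear_factors (chain_edges B (y # ys))))"
  proof -
    have "qeq n (qprod (linear_factors (chain_edges (insert y B) (pre @ post))) :: 'k qterm)
                (qprod (linear_factors (chain_edges (insert y B) ys)))"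
      by (rule Cons.IH) (use Cons.prems xs in auto)
    from qprod_append_cong[OF this qeq.refl, of "[Sub T (Gen (B, y))]"] show ?thesis by simp
  qed
  finally show ?case .
qed

fun edge_chain :: "pr set \<Rightarrow> nat set \<Rightarrow> nat list \<Rightarrow> bool" where
  "edge_chain E B [] \<longleftrightarrow> True"
| "edge_chain E B (x # xs) \<longleftrightarrow>
     x \<notin> B \<and> x \<notin> set xs \<and> (B, x) \<in> E \<and> edge_chain E (insert x B) xs"

fun chain_vertices :: "nat set \<Rightarrow> nat list \<Rightarrow> nat set list" where
  "chain_vertices B [] = [B]"
| "chain_vertices B (x # xs) = B # chain_vertices (insert x B) xs"

lemma chain_vertices_bounds: "v \<in> set (chain_vertices B xs) \<Longrightarrow> B \<subseteq> v \<and> v \<subseteq> B \<union> set xs"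
  by (induction xs arbitrary: B) auto

lemma edge_chain_disjoint_distinct: "edge_chain E B xs \<Longrightarrow> B \<inter> set xs = {} \<and> distinct xs"
  by (induction xs arbitrary: B) auto

lemma edge_chain_edges_subset: "edge_chain E B xs \<Longrightarrow> set (chain_edges B xs) \<subseteq> E"
  by (induction xs arbitrary: B) auto

lemma edge_chain_append_top:
  "edge_chain E B xs \<Longrightarrow> l \<notin> B \<Longrightarrow> l \<notin> set xs \<Longrightarrow> (B \<union> set xs, l) \<in> E \<Longrightarrow>
     edge_chain E B (xs @ [l]) \<and> set (chain_vertices B xs) \<subseteq> set (chain_vertices B (xs @ [l]))"
proof (induction xs arbitrary: B)
  case (Cons x xs)
  have "edge_chain E (insert x B) (xs @ [l]) \<and>
        set (chain_vertices (insert x B) xs) \<subseteq> set (chain_vertices (insert x B) (xs @ [l]))"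
    using Cons.prems by (intro Cons.IH) auto
  then show ?case using Cons.prems by auto
qed simp

lemma defining_set_of_edge_chain:
  assumes chain: "edge_chain E {} xs" and labels: "set xs = {1..n}"
  shows "defining_set n TYPE('k::field) E"
  unfolding defining_set_def
proof (intro exI conjI)
  have dist: "distinct xs" using edge_chain_disjoint_distinct[OF chain] by simp
  show "length (chain_edges {} xs) = n" using distinct_card[OF dist] labels by simp
  show "set (chain_edges {} xs) \<subseteq> E" using edge_chain_edges_subset[OF chain] .
  have range: "set [1..<Suc n] = {1..n}"
    by (simp only: set_upt atLeastLessThanSuc_atLeastAtMost)
  have "qeq n (Ppoly n :: 'k qterm) (qprod (linear_factors (chain_edges {} xs)))"
    unfolding Ppoly_eq_chain_product by (rule qprod_chain_perm)
      (simp_all only: range labels dist distinct_upt empty_subsetI subset_refl Int_empty_left)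
  then show "qeq n (Ppoly n :: 'k qterm) (qprod (map (\<lambda>y. Sub T (Gen y)) (rev (chain_edges {} xs))))"
    by (simp only: linear_factors_def)
qed

section \<open>The u- and d-rules\<close>

locale du_closed =
  fixes E :: "pr set"
  assumes u_closed: "(A, i) \<in> E \<Longrightarrow> (A, j) \<in> E \<Longrightarrow> i \<noteq> j \<Longrightarrow> (insert j A, i) \<in> E"
    and d_closed: "(insert j D, i) \<in> E \<Longrightarrow> (insert i D, j) \<in> E \<Longrightarrow> i \<noteq> j \<Longrightarrow> (D, i) \<in> E"

lemma envelope_is_pr:
  assumes "\<forall>z\<in>Z. is_pr n z" and "x \<in> envelope n K Z"
  shows "is_pr n x"
  using assms(2) by (induction rule: envelope.induct) (use assms(1) in auto)

lemma du_closed_envelope: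
  fixes K :: "'k::field itself"
  assumes Zp: "\<forall>z\<in>Z. is_pr n z"
  shows "du_closed (envelope n K Z)"
proof
  fix A i j
  assume h1: "(A, i) \<in> envelope n K Z" and h2: "(A, j) \<in> envelope n K Z" and ij: "i \<noteq> j"
  have c: "A \<subseteq> {1..n}" "i \<in> {1..n}" "j \<in> {1..n}" "i \<notin> A" "j \<notin> A"
    using envelope_is_pr[OF Zp h1] envelope_is_pr[OF Zp h2] by (auto simp: is_pr_def)
  show "(insert j A, i) \<in> envelope n K Z"
  proof (rule envelope.u_op[OF h1 h2 ij])
    show "is_pr n (insert j A, i)" using c ij by (auto simp: is_pr_def)
    show "qeq n (Mul (Sub (Gen (A, i)) (Gen (A, j))) (Gen (A, i)) :: 'k qterm)
          (Mul (Gen (insert j A, i)) (Sub (Gen (A, i)) (Gen (A, j))))"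
      by (rule qeq_u_identity[where c = "Gen (insert i A, j)"])
        (use qeq.rel_add[OF c(1-3) ij c(4,5)] qeq.rel_mul[OF c(1-3) ij c(4,5)] in simp_all)
  qed
next
  fix D i j
  assume h1: "(insert j D, i) \<in> envelope n K Z" and h2: "(insert i D, j) \<in> envelope n K Z"
    and ij: "i \<noteq> j"
  have c: "D \<subseteq> {1..n}" "i \<in> {1..n}" "j \<in> {1..n}" "i \<notin> D" "j \<notin> D"
    using envelope_is_pr[OF Zp h1] envelope_is_pr[OF Zp h2] by (auto simp: is_pr_def)
  show "(D, i) \<in> envelope n K Z"
  proof (rule envelope.d_op[OF h1 h2])
    show "(insert j D, i) \<noteq> (insert i D, j)" "insert j D \<union> {i} = insert i D \<union> {j}"
      using ij by auto
    show "is_pr n (D, i)" using c by (auto simp: is_pr_def)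
    show "qeq n (Mul (Sub (Gen (insert j D, i)) (Gen (insert i D, j))) (Gen (D, i)) :: 'k qterm)
          (Mul (Gen (insert j D, i)) (Sub (Gen (insert j D, i)) (Gen (insert i D, j))))"
      by (rule qeq.sym, rule qeq_intertwine[where b = "Gen (D, j)"])
        (use qeq.rel_add[OF c(1-3) ij c(4,5)] qeq.rel_mul[OF c(1-3) ij c(4,5)] in simp_all)
  qed
qed

context du_closed
begin

(* Each induction step is one u-square: (B, x), (B, l) give (B + l, x), (B + x, l). *)
lemma edge_chain_insert_base:
  "edge_chain E B xs \<Longrightarrow> l \<notin> B \<Longrightarrow> l \<notin> set xs \<Longrightarrow> (B, l) \<in> E \<Longrightarrow>
     edge_chain E (insert l B) xs \<and> (B \<union> set xs, l) \<in> E"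
proof (induction xs arbitrary: B)
  case (Cons x xs)
  then have lx: "l \<noteq> x" by auto
  have up_x: "(insert l B, x) \<in> E" and up_l: "(insert x B, l) \<in> E"
    using u_closed[of B x l] u_closed[of B l x] Cons.prems lx by auto
  have "edge_chain E (insert l (insert x B)) xs \<and> (insert x B \<union> set xs, l) \<in> E"
    using Cons.prems lx up_l by (intro Cons.IH) auto
  then show ?case using up_x Cons.prems lx by (simp add: insert_commute)
qed simp

lemma edge_chain_lift:
  "edge_chain E B xs \<Longrightarrow> l \<notin> B \<Longrightarrow> l \<notin> set xs \<Longrightarrow> v \<in> set (chain_vertices B xs) \<Longrightarrow>
     (v, l) \<in> E \<Longrightarrow>
     (B \<union> set xs, l) \<in> E \<and> (\<exists>ys. edge_chain E B ys \<and> set ys = insert l (set xs) \<and>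
        v \<in> set (chain_vertices B ys) \<and> insert l v \<in> set (chain_vertices B ys))"
proof (induction xs arbitrary: B)
  case Nil
  then show ?case by (intro conjI exI[of _ "[l]"]) auto
next
  case (Cons x xs)
  show ?case
  proof (cases "v = B")
    case True
    then have "edge_chain E (insert l B) (x # xs) \<and> (B \<union> set (x # xs), l) \<in> E"
      using edge_chain_insert_base[of B "x # xs" l] Cons.prems by simp
    then show ?thesis using Cons.prems True by (intro conjI exI[of _ "l # x # xs"]) auto
  next
    case False
    then have "v \<in> set (chain_vertices (insert x B) xs)" using Cons.prems by simp
    then have IH: "(insert x B \<union> set xs, l) \<in> E \<and> (\<exists>ys. edge_chain E (insert x B) ys \<and>
        set ys = insert l (set xs) \<and> v \<in> set (chain_vertices (insert x B) ys) \<and>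
        insert l v \<in> set (chain_vertices (insert x B) ys))"
      using Cons.prems by (intro Cons.IH) auto
    then obtain ys where "edge_chain E (insert x B) ys" "set ys = insert l (set xs)"
        "v \<in> set (chain_vertices (insert x B) ys)" "insert l v \<in> set (chain_vertices (insert x B) ys)"
      by blast
    then show ?thesis using IH Cons.prems by (intro conjI exI[of _ "x # ys"]) auto
  qed
qed

(* Each induction step is one d-square: (B, x), (B - l + x, l) give (B - l, x), (B - l, l). *)
lemma edge_chain_lower:
  "edge_chain E B xs \<Longrightarrow> l \<in> B \<Longrightarrow> l \<notin> set xs \<Longrightarrow> v \<in> set (chain_vertices B xs) \<Longrightarrow>
     (v - {l}, l) \<in> E \<Longrightarrow>
     (B - {l}, l) \<in> E \<and> (\<exists>ys. edge_chain E (B - {l}) ys \<and> set ys = insert l (set xs) \<and>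
        v \<in> set (chain_vertices (B - {l}) ys) \<and> v - {l} \<in> set (chain_vertices (B - {l}) ys))"
proof (induction xs arbitrary: B)
  case Nil
  moreover have "insert l (B - {l}) = B" using Nil.prems by auto
  ultimately show ?case by (intro conjI exI[of _ "[l]"]) auto
next
  case (Cons x xs)
  have B: "insert l (B - {l}) = B" using Cons.prems by auto
  show ?case
  proof (cases "v = B")
    case True
    then show ?thesis using Cons.prems B by (intro conjI exI[of _ "l # x # xs"]) auto
  next
    case False
    then have "v \<in> set (chain_vertices (insert x B) xs)" using Cons.prems by simp
    then have IH: "(insert x B - {l}, l) \<in> E \<and> (\<exists>ys. edge_chain E (insert x B - {l}) ys \<and>
        set ys = insert l (set xs) \<and> v \<in> set (chain_vertices (insert x B - {l}) ys) \<and>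
        v - {l} \<in> set (chain_vertices (insert x B - {l}) ys))"
      using Cons.prems by (intro Cons.IH) auto
    then obtain ys where ys: "edge_chain E (insert x B - {l}) ys" "set ys = insert l (set xs)"
        "v \<in> set (chain_vertices (insert x B - {l}) ys)"
        "v - {l} \<in> set (chain_vertices (insert x B - {l}) ys)"
      by blast
    have lx: "l \<noteq> x" using Cons.prems by auto
    have x_up: "(insert l (B - {l}), x) \<in> E" using B Cons.prems by simp
    have l_up: "(insert x (B - {l}), l) \<in> E" using IH lx by (simp add: insert_Diff_if)
    have "(B - {l}, x) \<in> E" "(B - {l}, l) \<in> E"
      using d_closed[OF x_up l_up] d_closed[OF l_up x_up] lx by auto
    moreover have "insert x (B - {l}) = insert x B - {l}" using lx by auto
    ultimately show ?thesis using ys Cons.prems by (intro conjI exI[of _ "x # ys"]) auto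
  qed
qed

end

section \<open>Chain covers of connected edge sets\<close>

lemma edge_vertices_empty [simp]: "edge_vertices {} = {}"
  and edge_vertices_insert: "edge_vertices (insert (A, l) S) = {A, insert l A} \<union> edge_vertices S"
  by (auto simp: edge_vertices_def)

lemma edges_connected_touching_edge:
  assumes conn: "edges_connected G" and S: "S \<subset> G" "S \<noteq> {}"
  shows "\<exists>(A, l)\<in>G - S. A \<in> edge_vertices S \<or> insert l A \<in> edge_vertices S"
proof (rule ccontr)
  assume apart: "\<not> ?thesis"
  obtain A0 l0 where s: "(A0, l0) \<in> S" using S by auto
  obtain A1 l1 where f: "(A1, l1) \<in> G - S" using S by auto
  have "A0 \<in> edge_vertices G" "A1 \<in> edge_vertices G"
    using s f S unfolding edge_vertices_def by blast+
  then have path: "(edge_adj G)\<^sup>*\<^sup>* A0 A1" using conn by (auto simp: edges_connected_def)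
  have "w \<in> edge_vertices S" if "(edge_adj G)\<^sup>*\<^sup>* A0 w" for w
    using that
  proof (induction rule: rtranclp_induct)
    case base
    show ?case using s unfolding edge_vertices_def by blast
  next
    case (step y z)
    from step.hyps(2) obtain A i where Ai: "(A, i) \<in> G"
      "(y = A \<and> z = insert i A) \<or> (z = A \<and> y = insert i A)"
      by (auto simp: edge_adj_def)
    show ?case
    proof (cases "(A, i) \<in> S")
      case True
      then show ?thesis using Ai by (auto simp: edge_vertices_def)
    next
      case False
      then have "\<not> (A \<in> edge_vertices S \<or> insert i A \<in> edge_vertices S)" using apart Ai by auto
      then show ?thesis using step.IH Ai by auto
    qed
  qed
  then have "A1 \<in> edge_vertices S" using path by blast
  then show False using apart f by auto
qed

definition chain_cover :: "pr set \<Rightarrow> nat set \<Rightarrow> pr set \<Rightarrow> bool" where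
  "chain_cover E B S \<longleftrightarrow> (\<forall>v\<in>edge_vertices S. \<exists>xs. edge_chain E B xs \<and> set xs = snd ` S \<and>
      v \<in> set (chain_vertices B xs))"

lemma chain_cover_empty: "chain_cover E B {}"
  by (simp add: chain_cover_def)

lemma chain_cover_singleton: "(A, l) \<in> E \<Longrightarrow> l \<notin> A \<Longrightarrow> chain_cover E A {(A, l)}"
  unfolding chain_cover_def edge_vertices_insert edge_vertices_empty
  by (intro ballI exI[of _ "[l]"]) simp

lemma defining_set_of_chain_cover:
  assumes cover: "chain_cover E B G" and labels: "snd ` G = {1..n}"
    and edge: "(A, l) \<in> G" and A: "A \<subseteq> {1..n}"
  shows "defining_set n TYPE('k::field) E"
proof -
  have "A \<in> edge_vertices G" using edge unfolding edge_vertices_def by blast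
  then obtain xs where xs: "edge_chain E B xs" "set xs = {1..n}" "A \<in> set (chain_vertices B xs)"
    using cover unfolding chain_cover_def labels by blast
  have "B = {}"
    using chain_vertices_bounds[OF xs(3)] edge_chain_disjoint_distinct[OF xs(1)] xs(2) A by blast
  with xs(1) have "edge_chain E {} xs" by simp
  then show ?thesis using xs(2) by (rule defining_set_of_edge_chain)
qed

context du_closed
begin

lemma chain_cover_insert_up:
  assumes cover: "chain_cover E B S" and e: "(A, l) \<in> E" "l \<notin> A" and new: "l \<notin> snd ` S"
    and touch: "A \<in> edge_vertices S"
  shows "chain_cover E B (insert (A, l) S)"
proof -
  obtain xs where xs: "edge_chain E B xs" "set xs = snd ` S" "A \<in> set (chain_vertices B xs)"
    using cover touch unfolding chain_cover_def by blast
  have lB: "l \<notin> B" using chain_vertices_bounds[OF xs(3)] e(2) by blast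
  have lxs: "l \<notin> set xs" using xs(2) new by simp
  obtain ys where top: "(B \<union> set xs, l) \<in> E" and ys: "edge_chain E B ys"
      "set ys = insert l (set xs)" "A \<in> set (chain_vertices B ys)"
      "insert l A \<in> set (chain_vertices B ys)"
    using edge_chain_lift[OF xs(1) lB lxs xs(3) e(1)] by blast
  have ys_labels: "set ys = snd ` insert (A, l) S" using ys(2) xs(2) by simp
  show ?thesis unfolding chain_cover_def
  proof
    fix v assume "v \<in> edge_vertices (insert (A, l) S)"
    then consider "v \<in> edge_vertices S" | "v = A" | "v = insert l A"
      by (auto simp: edge_vertices_insert)
    then show "\<exists>zs. edge_chain E B zs \<and> set zs = snd ` insert (A, l) S \<and>
        v \<in> set (chain_vertices B zs)"
    proof cases
      case 1
      then obtain xv where xv: "edge_chain E B xv" "set xv = snd ` S" "v \<in> set (chain_vertices B xv)"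
        using cover unfolding chain_cover_def by blast
      have "l \<notin> set xv" "(B \<union> set xv, l) \<in> E" using xv(2) xs(2) new top by simp_all
      then have "edge_chain E B (xv @ [l])" "v \<in> set (chain_vertices B (xv @ [l]))"
        using edge_chain_append_top[OF xv(1) lB] xv(3) by blast+
      moreover have "set (xv @ [l]) = snd ` insert (A, l) S" using xv(2) by simp
      ultimately show ?thesis by blast
    next
      case 2
      then show ?thesis using ys(1,3) ys_labels by blast
    next
      case 3
      then show ?thesis using ys(1,4) ys_labels by blast
    qed
  qed
qed

lemma chain_cover_insert_down:
  assumes cover: "chain_cover E B S" and e: "(A, l) \<in> E" "l \<notin> A" and new: "l \<notin> snd ` S"
    and touch: "insert l A \<in> edge_vertices S"
  shows "chain_cover E (B - {l}) (insert (A, l) S)"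
proof -
  obtain xs where xs: "edge_chain E B xs" "set xs = snd ` S" "insert l A \<in> set (chain_vertices B xs)"
    using cover touch unfolding chain_cover_def by blast
  have lxs: "l \<notin> set xs" using xs(2) new by simp
  have lB: "l \<in> B" using chain_vertices_bounds[OF xs(3)] lxs by blast
  have A: "insert l A - {l} = A" using e(2) by simp
  obtain ys where bottom: "(B - {l}, l) \<in> E" and ys: "edge_chain E (B - {l}) ys"
      "set ys = insert l (set xs)" "insert l A \<in> set (chain_vertices (B - {l}) ys)"
      "A \<in> set (chain_vertices (B - {l}) ys)"
    using edge_chain_lower[OF xs(1) lB lxs xs(3)] e(1) unfolding A by blast
  have ys_labels: "set ys = snd ` insert (A, l) S" using ys(2) xs(2) by simp
  show ?thesis unfolding chain_cover_def
  proof
    fix v assume "v \<in> edge_vertices (insert (A, l) S)"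
    then consider "v \<in> edge_vertices S" | "v = A" | "v = insert l A"
      by (auto simp: edge_vertices_insert)
    then show "\<exists>zs. edge_chain E (B - {l}) zs \<and> set zs = snd ` insert (A, l) S \<and>
        v \<in> set (chain_vertices (B - {l}) zs)"
    proof cases
      case 1
      then obtain xv where xv: "edge_chain E B xv" "set xv = snd ` S" "v \<in> set (chain_vertices B xv)"
        using cover unfolding chain_cover_def by blast
      have "insert l (B - {l}) = B" "l \<notin> set xv" using lB xv(2) new by auto
      then have "edge_chain E (B - {l}) (l # xv)" "v \<in> set (chain_vertices (B - {l}) (l # xv))"
        using xv(1,3) bottom by simp_all
      moreover have "set (l # xv) = snd ` insert (A, l) S" using xv(2) by simp
      ultimately show ?thesis by blast
    next
      case 2
      then show ?thesis using ys(1,4) ys_labels by blast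
    next
      case 3
      then show ?thesis using ys(1,3) ys_labels by blast
    qed
  qed
qed

lemma chain_cover_extend:
  assumes conn: "edges_connected G" and labels: "inj_on snd G" and edges: "G \<subseteq> E"
    and loopfree: "\<forall>(A, l)\<in>G. l \<notin> A" and S: "S \<subset> G" and cover: "chain_cover E B S"
  shows "\<exists>e\<in>G - S. \<exists>B'. chain_cover E B' (insert e S)"
proof (cases "S = {}")
  case True
  obtain A l where e: "(A, l) \<in> G - S" using S by auto
  then have "chain_cover E A {(A, l)}" using edges loopfree by (intro chain_cover_singleton) auto
  then show ?thesis using e True by blast
next
  case False
  then obtain A l where e: "(A, l) \<in> G - S"
    and touch: "A \<in> edge_vertices S \<or> insert l A \<in> edge_vertices S"
    using edges_connected_touching_edge[OF conn S] by blast
  have new: "l \<notin> snd ` S"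
  proof
    assume "l \<in> snd ` S"
    then obtain A' where A': "(A', l) \<in> S" by force
    then have "(A', l) = (A, l)" using inj_onD[OF labels, of "(A', l)" "(A, l)"] S e by auto
    then show False using A' e by simp
  qed
  have "(A, l) \<in> E" "l \<notin> A" using e edges loopfree by auto
  then have "chain_cover E B (insert (A, l) S) \<or> chain_cover E (B - {l}) (insert (A, l) S)"
    using touch chain_cover_insert_up[OF cover _ _ new] chain_cover_insert_down[OF cover _ _ new]
    by blast
  then show ?thesis using e by blast
qed

lemma chain_cover_exists:
  assumes "finite G" and "edges_connected G" and "inj_on snd G" and "G \<subseteq> E"
    and "\<forall>(A, l)\<in>G. l \<notin> A"
  shows "\<exists>B. chain_cover E B G"
  using assms(1)
proof (induction rule: finite_induct_select)
  case empty
  show ?case using chain_cover_empty by blast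
next
  case (select S)
  then obtain B where "chain_cover E B S" by blast
  then show ?case using chain_cover_extend[OF assms(2-5) select(1)] by blast
qed

end

theorem theorem1p4p6:
  fixes n :: nat and As :: "nat \<Rightarrow> nat set" and ix :: "nat \<Rightarrow> nat"
  assumes "n \<ge> 1"
    and "\<forall>k\<in>{1..n}. is_pr n (As k, ix k)"
    and "inj_on ix {1..n}"
    and "edges_connected ((\<lambda>k. (As k, ix k)) ` {1..n})"
  shows "sufficient n TYPE('k::field) ((\<lambda>k. (As k, ix k)) ` {1..n})"
proof -
  define G where "G = (\<lambda>k. (As k, ix k)) ` {1..n}"
  let ?E = "envelope n TYPE('k) G"
  have pr: "\<forall>z\<in>G. is_pr n z" using assms(2) unfolding G_def by blast
  interpret du_closed ?E by (rule du_closed_envelope[OF pr])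
  have fin: "finite G" unfolding G_def by simp
  have conn: "edges_connected G" using assms(4) unfolding G_def .
  have inj: "inj_on snd G"
    unfolding G_def by (rule inj_on_imageI) (use assms(3) in \<open>simp add: comp_def\<close>)
  have sub: "G \<subseteq> ?E" by (auto intro: envelope.base)
  have loopfree: "\<forall>(A, l)\<in>G. l \<notin> A" using pr unfolding is_pr_def by auto
  obtain B where cover: "chain_cover ?E B G"
    using chain_cover_exists[OF fin conn inj sub loopfree] by blast
  have "snd ` G = ix ` {1..n}" unfolding G_def by force
  also have "\<dots> = {1..n}"
    by (rule endo_inj_surj) (use assms(2,3) in \<open>auto simp: is_pr_def\<close>)
  finally have labels: "snd ` G = {1..n}" .
  have "(As 1, ix 1) \<in> G" "As 1 \<subseteq> {1..n}"
    using assms(1,2) unfolding G_def is_pr_def by auto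
  then have "defining_set n TYPE('k) ?E" by (rule defining_set_of_chain_cover[OF cover labels])
  then show ?thesis unfolding sufficient_def G_def by blast
qed

end
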